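(* Let $f\in C([0,1])$. Then for every $\varepsilon>0$ there exists a function $\phi$ generated by a $\sigma$-activated network with width $36$ and depth $5$ such that $|\phi(x)-f(x)|<\varepsilon$ for all $x\in[0,\tfrac{9}{10}]$.
   Context: Let $\sigma_1:\mathbb{R}\to\mathbb{R}$ be the continuous triangular-wave function of period $2$: $\sigma_1(x)=|x|$ for $x\in[-1,1]$, $\sigma_1(x+2)=\sigma_1(x)$. The activation is $\sigma(x)=\sigma_1(x)$ for $x\ge0$ and $\sigma(x)=x/(|x|+1)$ for $x<0$, applied entrywise. A function generated by a $\sigma$-activated network with one input, width $N$ and depth $L$ is a function of the form $\mathcal{L}_{\ell}\circ\sigma\circ\mathcal{L}_{\ell-1}\circ\cdots\circ\sigma\circ\mathcal{L}_0$ with $\ell\le L$ hidden layers, affine maps $\mathcal{L}_i$, $\mathcal{L}_0$ with domain $\mathbb{R}$, $\mathcal{L}_\ell$ with codomain $\mathbb{R}$, and at most $N$ neurons in each hidden layer. *)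

theory Defs
  imports "HOL-Analysis.Analysis"
begin

text \<open>Triangular wave of period 2: equals |x| on [-1,1] and is 2-periodic.\<close>
definition sigma1 :: "real \<Rightarrow> real" where
  "sigma1 x = \<bar>x - 2 * of_int \<lfloor>(x + 1) / 2\<rfloor>\<bar>"

definition sigma :: "real \<Rightarrow> real" where
  "sigma x = (if x \<ge> 0 then sigma1 x else x / (\<bar>x\<bar> + 1))"

definition affine_map :: "(nat \<Rightarrow> nat \<Rightarrow> real) \<Rightarrow> (nat \<Rightarrow> real) \<Rightarrow> nat \<Rightarrow> real list \<Rightarrow> real list" where
  "affine_map W b m v = map (\<lambda>i. (\<Sum>j<length v. W i j * v ! j) + b i) [0..<m]"

fun eval_hidden :: "((nat \<Rightarrow> nat \<Rightarrow> real) \<times> (nat \<Rightarrow> real) \<times> nat) list \<Rightarrow> real list \<Rightarrow> real list" where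
  "eval_hidden [] v = v"
| "eval_hidden ((W, b, m) # ls) v = eval_hidden ls (map sigma (affine_map W b m v))"

definition generated_by_net :: "nat \<Rightarrow> nat \<Rightarrow> (real \<Rightarrow> real) \<Rightarrow> bool" where
  "generated_by_net N L phi \<longleftrightarrow>
     (\<exists>layers w c. length layers \<le> L \<and> (\<forall>(W, b, m) \<in> set layers. m \<le> N) \<and>
        (\<forall>x. phi x = (\<Sum>j<length (eval_hidden layers [x]). w j * eval_hidden layers [x] ! j) + c))"

end

theory Submission
  imports Defs "HOL-Number_Theory.Cong"
begin

(* After rescaling f to a function g with values in [0,1], cut [0,1] into cells of width 1/n and
   run three copies of the network on the grids y = n x + 1 + s/3, s = 0, 1, 2. The first layers
   recover the cell index j = floor y exactly whenever frac y <= 3/4, since three triangle waves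
   cancel the fractional part there. The values of g at the left ends of all cells are stored, to
   precision 2/n, in a single natural number t per copy: with m = (n+2)! the Goedel moduli 1 + j m
   are pairwise coprime, so by the Chinese remainder theorem the residue t mod (1 + j m) can encode
   the value for cell j, and the periodic activation reads it off as sigma (2 t / (1 + j m)), the
   division being done by sigma (- m j) = - m j / (1 + m j). At every x at least two of the three
   copies have frac y <= 3/4, so their median, computed with |u| = sigma (u + 2), is within epsilon
   of g x. *)

lemma sigma1_add_even: "sigma1 (x + 2 * of_int k) = sigma1 x"
proof -
  have "\<lfloor>(x + 2 * of_int k + 1) / 2\<rfloor> = \<lfloor>(x + 1) / 2 + of_int k\<rfloor>"
    by (simp add: field_simps)
  then show ?thesis
    unfolding sigma1_def by (simp add: algebra_simps)
qed

lemma sigma1_eq_abs: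
  assumes "\<bar>x\<bar> \<le> 1"
  shows "sigma1 x = \<bar>x\<bar>"
proof (cases "x = 1")
  case False
  then have "\<lfloor>(x + 1) / 2\<rfloor> = 0"
    using assms by (simp add: floor_eq_iff abs_le_iff)
  then show ?thesis by (simp add: sigma1_def)
qed (simp add: sigma1_def)

lemma sigma1_bounds: "0 \<le> sigma1 x" "sigma1 x \<le> 1"
proof -
  have "\<lfloor>(x + 1) / 2\<rfloor> \<le> (x + 1) / 2" "(x + 1) / 2 < \<lfloor>(x + 1) / 2\<rfloor> + 1"
    by linarith+
  then show "0 \<le> sigma1 x" "sigma1 x \<le> 1"
    unfolding sigma1_def by (simp_all add: field_simps abs_le_iff)
qed

lemma sigma_nonneg_eq: "0 \<le> x \<Longrightarrow> sigma x = sigma1 x"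
  by (simp add: sigma_def)

lemma sigma_neg_eq: "x < 0 \<Longrightarrow> sigma x = x / (1 - x)"
  by (simp add: sigma_def)

lemma sigma_eq_self: "0 \<le> x \<Longrightarrow> x \<le> 1 \<Longrightarrow> sigma x = x"
  by (simp add: sigma_def sigma1_eq_abs)

lemma sigma_add_2_eq_abs: "\<bar>x\<bar> \<le> 1 \<Longrightarrow> sigma (x + 2) = \<bar>x\<bar>"
  using sigma1_add_even[of x 1] by (simp add: sigma_def sigma1_eq_abs abs_le_iff)

lemma sigma_bounds_nonneg: "0 \<le> x \<Longrightarrow> 0 \<le> sigma x \<and> sigma x \<le> 1"
  by (simp add: sigma_def sigma1_bounds)

lemma sigma_gt_minus_one: "-1 < sigma x"
  using sigma1_bounds[of x] by (simp add: sigma_def field_simps)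

definition floor_gadget :: "real \<Rightarrow> real" where
  "floor_gadget y = y + 1/4 - sigma (2*y) / 2 - sigma (2*y - 1/2) / 2 - sigma (4*y) / 4"

lemma floor_gadget_eq_floor:
  assumes "1/4 \<le> y" "frac y \<le> 3/4"
  shows "floor_gadget y = \<lfloor>y\<rfloor>"
proof -
  define j where "j = \<lfloor>y\<rfloor>"
  define u where "u = frac y"
  have u: "0 \<le> u" "u \<le> 3/4" using assms(2) by (simp_all add: u_def)
  have y: "y = u + j" by (simp add: u_def j_def frac_def)
  have "sigma (2*y) = sigma1 (2*u)"
    using sigma1_add_even[of "2*u" j] assms(1) by (simp add: sigma_nonneg_eq y)
  moreover have "sigma (2*y - 1/2) = sigma1 (2*u - 1/2)"
    using sigma1_add_even[of "2*u - 1/2" j] assms(1) by (simp add: sigma_nonneg_eq y algebra_simps)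
  moreover have "sigma (4*y) = sigma1 (4*u)"
    using sigma1_add_even[of "4*u" "2*j"] assms(1) by (simp add: sigma_nonneg_eq y algebra_simps)
  moreover have "sigma1 (2*u) = 1 - \<bar>2*u - 1\<bar>"
    using sigma1_add_even[of "2*u - 2" 1] u by (cases "u \<le> 1/2") (simp_all add: sigma1_eq_abs)
  moreover have "sigma1 (2*u - 1/2) = \<bar>2*u - 1/2\<bar>"
    using u by (simp add: sigma1_eq_abs)
  moreover have "sigma1 (4*u) = (if u \<le> 1/4 then 4*u else \<bar>4*u - 2\<bar>)"
    using sigma1_add_even[of "4*u - 2" 1] u by (cases "u \<le> 1/4") (simp_all add: sigma1_eq_abs)
  ultimately show ?thesis
    unfolding floor_gadget_def j_def[symmetric] using u by (auto simp: y abs_if field_simps)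
qed

lemma sigma_mod_readout:
  fixes t q :: nat
  assumes "0 < q" "2 * (t mod q) \<le> q"
  shows "sigma (2 * real t / real q) = 2 * real (t mod q) / real q"
proof -
  define u where "u = 2 * real (t mod q) / real q"
  have "real (2 * (t mod q)) \<le> real q"
    using assms(2) by (simp only: of_nat_le_iff)
  then have u: "0 \<le> u" "u \<le> 1"
    using assms(1) by (simp_all add: u_def)
  have "real t = real (t mod q) + real q * real (t div q)"
    by (metis mod_div_mult_eq of_nat_add of_nat_mult add.commute mult.commute)
  then have "2 * real t / real q = u + 2 * of_int (int (t div q))"
    using assms(1) by (simp add: u_def field_simps)
  then show ?thesis
    using u sigma1_add_even[of u "int (t div q)"]
    by (simp add: sigma_nonneg_eq sigma1_eq_abs u_def[symmetric])
qed

definition readout :: "nat \<Rightarrow> nat \<Rightarrow> real \<Rightarrow> real" where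
  "readout m t z = sigma (2 * real t + 2 * real t * sigma (- (real m * z)))"

lemma readout_bounds: "0 \<le> readout m t z \<and> readout m t z \<le> 1"
proof -
  have "0 \<le> 2 * real t * (1 + sigma (- (real m * z)))"
    using sigma_gt_minus_one[of "- (real m * z)"] by simp
  then show ?thesis
    unfolding readout_def by (intro sigma_bounds_nonneg) (simp add: algebra_simps)
qed

lemma readout_eq_mod:
  fixes j m t :: nat
  assumes "0 < j" "0 < m" "2 * (t mod (1 + j * m)) \<le> 1 + j * m"
  shows "readout m t (real j) = 2 * real (t mod (1 + j * m)) / real (1 + j * m)"
proof -
  have pos: "0 < real m * real j"
    using assms(1,2) by simp
  then have "sigma (- (real m * real j)) = - (real m * real j) / (1 + real m * real j)"
    by (simp add: sigma_neg_eq)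
  moreover have "2 * real t + 2 * real t * (- (real m * real j) / (1 + real m * real j))
      = 2 * real t / (1 + real m * real j)"
    using pos by (simp add: field_simps)
  ultimately have "2 * real t + 2 * real t * sigma (- (real m * real j)) = 2 * real t / real (1 + j * m)"
    by (simp add: mult.commute)
  then show ?thesis
    using sigma_mod_readout[OF _ assms(3)] by (simp add: readout_def)
qed

lemma coprime_Suc_mult_fact:
  fixes i j N :: nat
  assumes "i \<le> N" "j \<le> N" "i \<noteq> j"
  shows "coprime (1 + i * fact N) (1 + j * fact N)"
proof -
  have "coprime (1 + i * fact N) (1 + j * fact N)" if "i < j" "j \<le> N" for i j
  proof (rule coprimeI)
    fix d assume d: "d dvd 1 + i * fact N" "d dvd 1 + j * fact N"
    then have "d dvd j * (1 + i * fact N) - i * (1 + j * fact N)"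
      by (intro dvd_diff_nat dvd_mult)
    also have "j * (1 + i * fact N) - i * (1 + j * fact N) = j - i"
      by (simp add: algebra_simps)
    also have "j - i dvd fact N"
      using that by (intro dvd_fact) auto
    finally have "d dvd i * fact N"
      by simp
    with d(1) have "d dvd (1 + i * fact N) - i * fact N"
      by (rule dvd_diff_nat)
    then show "is_unit d" by simp
  qed
  with assms show ?thesis
    by (metis coprime_commute linorder_neq_iff)
qed

lemma goedel_beta_residues:
  fixes r :: "nat \<Rightarrow> nat"
  assumes "\<forall>j\<in>{1..N}. r j < 1 + j * fact N"
  shows "\<exists>t. \<forall>j\<in>{1..N}. t mod (1 + j * fact N) = r j"
proof -
  obtain t where "\<forall>j\<in>{1..N}. [t = r j] (mod (1 + j * fact N))"
    using chinese_remainder_nat[of "{1..N}" "\<lambda>j. 1 + j * fact N" r] coprime_Suc_mult_fact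
    by force
  then show ?thesis
    using assms by (metis cong_def mod_less)
qed

lemma quantize_bounds:
  fixes v q :: real
  assumes "0 \<le> v" "v \<le> 1" "0 < q"
  defines "r \<equiv> nat \<lfloor>v * q / 2\<rfloor>"
  shows "2 * real r \<le> q" "\<bar>2 * real r / q - v\<bar> < 2 / q"
proof -
  have r: "real r \<le> v * q / 2" "v * q / 2 - 1 < real r"
    using assms by (simp_all add: r_def) linarith+
  have "v * q \<le> q"
    using assms by (simp add: mult_le_cancel_right1)
  with r show "2 * real r \<le> q" by simp
  have "\<bar>2 * real r - v * q\<bar> / q < 2 / q"
    using r assms(3) by (intro divide_strict_right_mono) auto
  moreover have "2 * real r / q - v = (2 * real r - v * q) / q"
    using assms(3) by (simp add: field_simps)
  ultimately show "\<bar>2 * real r / q - v\<bar> < 2 / q"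
    using assms(3) by simp
qed

lemma goedel_encode_values:
  fixes v :: "nat \<Rightarrow> real"
  assumes "\<forall>j\<in>{1..N}. v j \<in> {0..1}"
  shows "\<exists>t. \<forall>j\<in>{1..N}. 2 * (t mod (1 + j * fact N)) \<le> 1 + j * fact N \<and>
           \<bar>2 * real (t mod (1 + j * fact N)) / real (1 + j * fact N) - v j\<bar> < 2 / real N"
proof -
  define q :: "nat \<Rightarrow> nat" where "q j = 1 + j * fact N" for j
  define r where "r j = nat \<lfloor>v j * real (q j) / 2\<rfloor>" for j
  have r: "2 * real (r j) \<le> real (q j)" "\<bar>2 * real (r j) / real (q j) - v j\<bar> < 2 / real (q j)"
    if "j \<in> {1..N}" for j
  proof -
    have "0 < q j"
      by (simp add: q_def)
    moreover have "0 \<le> v j" "v j \<le> 1"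
      using assms that by auto
    ultimately have "0 \<le> v j" "v j \<le> 1" "0 < real (q j)"
      by simp_all
    then show "2 * real (r j) \<le> real (q j)" "\<bar>2 * real (r j) / real (q j) - v j\<bar> < 2 / real (q j)"
      unfolding r_def by (rule quantize_bounds)+
  qed
  have r_le: "2 * r j \<le> q j" if "j \<in> {1..N}" for j
  proof -
    have "real (2 * r j) \<le> real (q j)"
      using r(1)[OF that] by simp
    then show ?thesis
      by (simp only: of_nat_le_iff)
  qed
  then have "\<forall>j\<in>{1..N}. r j < 1 + j * fact N"
    unfolding q_def by fastforce
  then obtain t where t: "\<forall>j\<in>{1..N}. t mod q j = r j"
    using goedel_beta_residues unfolding q_def by blast
  have "2 / real (q j) \<le> 2 / real N" if "j \<in> {1..N}" for j
  proof -
    have "N \<le> fact N"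
      by (rule fact_ge_self)
    also have "1 * fact N \<le> j * fact N"
      using that by (intro mult_le_mono1) auto
    also have "\<dots> \<le> q j"
      by (simp add: q_def)
    finally show ?thesis
      using that by (intro divide_left_mono) auto
  qed
  then show ?thesis
    using r r_le t unfolding q_def[symmetric] by (intro exI[of _ t]) fastforce
qed

lemma frac_two_of_three_shifts:
  fixes z :: real
  shows "(frac z \<le> 3/4 \<and> frac (z + 1/3) \<le> 3/4) \<or> (frac z \<le> 3/4 \<and> frac (z + 2/3) \<le> 3/4)
       \<or> (frac (z + 1/3) \<le> 3/4 \<and> frac (z + 2/3) \<le> 3/4)"
proof -
  have "frac (1/3 :: real) = 1/3" "frac (2/3 :: real) = 2/3"
    by (simp_all add: frac_eq)
  then show ?thesis
    using frac_ge_0[of z] frac_lt_1[of z] by (simp add: frac_add)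
qed

definition median3 :: "real \<Rightarrow> real \<Rightarrow> real \<Rightarrow> real" where
  "median3 a b c = max (min a b) (min (max a b) c)"

lemma median3_eq_abs:
  "median3 a b c = (a + b) / 2 + (\<bar>min a b - c\<bar> - \<bar>max a b - c\<bar>) / 2"
  by (auto simp: median3_def min_def max_def abs_if field_simps)

lemma median3_close:
  assumes "(\<bar>a - y\<bar> < e \<and> \<bar>b - y\<bar> < e) \<or> (\<bar>a - y\<bar> < e \<and> \<bar>c - y\<bar> < e) \<or> (\<bar>b - y\<bar> < e \<and> \<bar>c - y\<bar> < e)"
  shows "\<bar>median3 a b c - y\<bar> < e"
  using assms by (auto simp: median3_def min_def max_def abs_less_iff)

definition dot :: "real list \<Rightarrow> real list \<Rightarrow> real" where
  "dot w v = (\<Sum>j<length v. w ! j * v ! j)"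

lemma dot_Nil [simp]: "dot w [] = 0"
  by (simp add: dot_def)

lemma dot_Cons [simp]: "dot (a # w) (x # v) = a * x + dot w v"
  unfolding dot_def by (simp only: length_Cons sum.lessThan_Suc_shift nth_Cons_0 nth_Cons_Suc)

definition layer :: "(real list \<times> real) list \<Rightarrow> (nat \<Rightarrow> nat \<Rightarrow> real) \<times> (nat \<Rightarrow> real) \<times> nat" where
  "layer ns = ((\<lambda>i j. fst (ns ! i) ! j), (\<lambda>i. snd (ns ! i)), length ns)"

lemma eval_hidden_layer_Cons:
  "eval_hidden (layer ns # ls) v = eval_hidden ls (map (\<lambda>(w, b). sigma (dot w v + b)) ns)"
proof -
  have "affine_map (\<lambda>i j. fst (ns ! i) ! j) (\<lambda>i. snd (ns ! i)) (length ns) v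
        = map (\<lambda>(w, b). dot w v + b) ns"
    unfolding affine_map_def dot_def by (rule nth_equalityI) (auto simp: case_prod_beta)
  then show ?thesis
    by (simp add: layer_def o_def case_prod_unfold)
qed

lemma eval_hidden_append: "eval_hidden (ls @ ls') v = eval_hidden ls' (eval_hidden ls v)"
  by (induction ls arbitrary: v) auto

lemma generated_by_net_layers:
  assumes "length nss \<le> L" "\<forall>ns\<in>set nss. length ns \<le> N"
  shows "generated_by_net N L (\<lambda>x. dot w (eval_hidden (map layer nss) [x]))"
  unfolding generated_by_net_def using assms
  by (intro exI[of _ "map layer nss"] exI[of _ "\<lambda>j. w ! j"] exI[of _ 0])
     (auto simp: layer_def dot_def)

lemma generated_by_net_affine:
  assumes "generated_by_net N L \<phi>"
  shows "generated_by_net N L (\<lambda>x. a * \<phi> x + b)"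
proof -
  obtain ls w c where ls: "length ls \<le> L" "\<forall>(W, b, m) \<in> set ls. m \<le> N"
    and \<phi>: "\<And>x. \<phi> x = (\<Sum>j<length (eval_hidden ls [x]). w j * eval_hidden ls [x] ! j) + c"
    using assms unfolding generated_by_net_def by blast
  show ?thesis
    unfolding generated_by_net_def
    by (intro exI[of _ ls] exI[of _ "\<lambda>j. a * w j"] exI[of _ "a * c + b"])
       (simp add: ls \<phi> algebra_simps sum_distrib_left)
qed

lemma generated_by_net_mono:
  assumes "generated_by_net N L \<phi>" "N \<le> N'" "L \<le> L'"
  shows "generated_by_net N' L' \<phi>"
proof -
  obtain ls w c where ls: "length ls \<le> L" "\<forall>(W, b, m) \<in> set ls. m \<le> N"
    and \<phi>: "\<forall>x. \<phi> x = (\<Sum>j<length (eval_hidden ls [x]). w j * eval_hidden ls [x] ! j) + c"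
    using assms(1) unfolding generated_by_net_def by blast
  have "\<forall>(W, b, m) \<in> set ls. m \<le> N'"
    using ls(2) assms(2) by auto
  then show ?thesis
    unfolding generated_by_net_def using ls(1) assms(3) \<phi> by (intro exI conjI) auto
qed

text \<open>The offset 1 keeps every cell index positive, which the readout needs.\<close>
definition grid :: "nat \<Rightarrow> nat \<Rightarrow> real \<Rightarrow> real" where
  "grid n s x = real n * x + 1 + real s / 3"

text \<open>For \<open>y = grid n s x\<close>, neurons \<open>3s\<close> to \<open>3s + 2\<close> of the first layer compute \<open>sigma (2y)\<close>,
  \<open>sigma (2y - 1/2)\<close> and \<open>sigma (4y)\<close>, and the last one passes \<open>x\<close> on.\<close>
definition wave_layer :: "nat \<Rightarrow> (real list \<times> real) list" where
  "wave_layer n =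
    [([2 * real n], 2), ([2 * real n], 2 - 1/2), ([4 * real n], 4),
     ([2 * real n], 8/3), ([2 * real n], 8/3 - 1/2), ([4 * real n], 16/3),
     ([2 * real n], 10/3), ([2 * real n], 10/3 - 1/2), ([4 * real n], 20/3),
     ([1], 0)]"

definition index_layer :: "nat \<Rightarrow> nat \<Rightarrow> (real list \<times> real) list" where
  "index_layer n m =
    [([real m/2, real m/2, real m/4, 0, 0, 0, 0, 0, 0, - (real m * real n)], - (real m * (1 + 1/4))),
     ([0, 0, 0, real m/2, real m/2, real m/4, 0, 0, 0, - (real m * real n)], - (real m * (1 + 1/3 + 1/4))),
     ([0, 0, 0, 0, 0, 0, real m/2, real m/2, real m/4, - (real m * real n)], - (real m * (1 + 2/3 + 1/4)))]"

definition readout_layer :: "(nat \<Rightarrow> nat) \<Rightarrow> (real list \<times> real) list" where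
  "readout_layer t =
    [([2 * real (t 0), 0, 0], 2 * real (t 0)),
     ([0, 2 * real (t 1), 0], 2 * real (t 1)),
     ([0, 0, 2 * real (t 2)], 2 * real (t 2))]"

text \<open>From \<open>[a, b, c]\<close> these layers compute \<open>[a, b, c, |a - b|]\<close> and then
  \<open>[a, b, |max a b - c|, |min a b - c|]\<close>, each absolute value as \<open>sigma (u + 2)\<close>.\<close>
definition median_layers :: "(real list \<times> real) list list" where
  "median_layers =
    [[([1, 0, 0], 0), ([0, 1, 0], 0), ([0, 0, 1], 0), ([1, -1, 0], 2)],
     [([1, 0, 0, 0], 0), ([0, 1, 0, 0], 0), ([1/2, 1/2, -1, 1/2], 2), ([1/2, 1/2, -1, -1/2], 2)]]"

definition median_output :: "real list" where
  "median_output = [1/2, 1/2, -1/2, 1/2]"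

lemma readout_layers_eval:
  assumes "0 \<le> x" "x \<le> 1"
  shows "eval_hidden (map layer [wave_layer n, index_layer n m, readout_layer t]) [x]
       = map (\<lambda>s. readout m (t s) (floor_gadget (grid n s x))) [0, 1, 2]"
  using assms
  by (simp add: eval_hidden_layer_Cons wave_layer_def index_layer_def readout_layer_def
      readout_def floor_gadget_def grid_def sigma_eq_self algebra_simps)

lemma median_layers_eval:
  assumes "a \<in> {0..1}" "b \<in> {0..1}" "c \<in> {0..1}"
  shows "dot median_output (eval_hidden (map layer median_layers) [a, b, c]) = median3 a b c"
proof -
  have max_min: "(a + b + \<bar>a - b\<bar>) / 2 = max a b" "(a + b - \<bar>a - b\<bar>) / 2 = min a b"
    by (auto simp: max_def min_def)
  have "sigma (a - b + 2) = \<bar>a - b\<bar>"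
    using assms by (intro sigma_add_2_eq_abs) auto
  moreover have "sigma ((a + b + \<bar>a - b\<bar>) / 2 - c + 2) = \<bar>max a b - c\<bar>"
    unfolding max_min using assms by (intro sigma_add_2_eq_abs) auto
  moreover have "sigma ((a + b - \<bar>a - b\<bar>) / 2 - c + 2) = \<bar>min a b - c\<bar>"
    unfolding max_min using assms by (intro sigma_add_2_eq_abs) auto
  ultimately show ?thesis
    using assms
    by (simp add: eval_hidden_layer_Cons median_layers_def median_output_def sigma_eq_self
        median3_eq_abs field_simps)
qed

definition approx_net :: "nat \<Rightarrow> nat \<Rightarrow> (nat \<Rightarrow> nat) \<Rightarrow> real \<Rightarrow> real" where
  "approx_net n m t x = dot median_output
     (eval_hidden (map layer ([wave_layer n, index_layer n m, readout_layer t] @ median_layers)) [x])"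

lemma approx_net_generated: "generated_by_net 10 5 (approx_net n m t)"
  unfolding approx_net_def
  by (rule generated_by_net_layers)
     (simp_all add: wave_layer_def index_layer_def readout_layer_def median_layers_def)

lemma approx_net_eq_median3:
  assumes "0 \<le> x" "x \<le> 1"
  shows "approx_net n m t x = median3 (readout m (t 0) (floor_gadget (grid n 0 x)))
     (readout m (t 1) (floor_gadget (grid n 1 x))) (readout m (t 2) (floor_gadget (grid n 2 x)))"
proof -
  have "eval_hidden (map layer [wave_layer n, index_layer n m, readout_layer t]) [x]
      = [readout m (t 0) (floor_gadget (grid n 0 x)), readout m (t 1) (floor_gadget (grid n 1 x)),
         readout m (t 2) (floor_gadget (grid n 2 x))]"
    using readout_layers_eval[OF assms] by simp
  then show ?thesis
    unfolding approx_net_def map_append eval_hidden_append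
    by (simp add: median_layers_eval readout_bounds)
qed

lemma grid_floor_bounds:
  assumes "0 \<le> x" "x \<le> 1" "s \<le> 2"
  shows "1 \<le> \<lfloor>grid n s x\<rfloor>" "\<lfloor>grid n s x\<rfloor> \<le> int n + 2"
proof -
  have "real n * x \<le> real n"
    using assms(2) by (simp add: mult_left_le)
  then show "1 \<le> \<lfloor>grid n s x\<rfloor>" "\<lfloor>grid n s x\<rfloor> \<le> int n + 2"
    using assms by (simp_all add: grid_def floor_le_iff)
qed

definition grid_point :: "nat \<Rightarrow> nat \<Rightarrow> nat \<Rightarrow> real" where
  "grid_point n s j = min 1 (max 0 ((real j - 1 - real s / 3) / real n))"

lemma grid_point_in_unit: "grid_point n s j \<in> {0..1}"
  by (simp add: grid_point_def)

lemma grid_point_close: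
  assumes "0 \<le> x" "x \<le> 1" "0 < n"
  shows "\<bar>grid_point n s (nat \<lfloor>grid n s x\<rfloor>) - x\<bar> < 1 / real n"
proof -
  define p where "p = (real (nat \<lfloor>grid n s x\<rfloor>) - 1 - real s / 3) / real n"
  have "real (nat \<lfloor>grid n s x\<rfloor>) = \<lfloor>grid n s x\<rfloor>"
    using assms(1) by (simp add: grid_def)
  moreover have "real n * p = real (nat \<lfloor>grid n s x\<rfloor>) - 1 - real s / 3"
    using assms(3) by (simp add: p_def)
  ultimately have "real n * x - 1 < real n * p" "real n * p \<le> real n * x"
    unfolding grid_def by linarith+
  then have "x - 1 / real n < p" "p \<le> x"
    using assms(3) by (simp_all add: field_simps)
  then show ?thesis
    using assms unfolding grid_point_def p_def[symmetric] by (simp add: abs_less_iff)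
qed

lemma approx_net_close:
  assumes "0 \<le> x" "x \<le> 1"
    and "\<And>s. s \<le> 2 \<Longrightarrow> frac (grid n s x) \<le> 3/4 \<Longrightarrow> \<bar>readout m (t s) (floor_gadget (grid n s x)) - y\<bar> < e"
  shows "\<bar>approx_net n m t x - y\<bar> < e"
proof -
  define a where "a s = readout m (t s) (floor_gadget (grid n s x))" for s
  have "grid n 1 x = grid n 0 x + 1/3" "grid n 2 x = grid n 0 x + 2/3"
    by (simp_all add: grid_def)
  then have "(frac (grid n 0 x) \<le> 3/4 \<and> frac (grid n 1 x) \<le> 3/4)
      \<or> (frac (grid n 0 x) \<le> 3/4 \<and> frac (grid n 2 x) \<le> 3/4)
      \<or> (frac (grid n 1 x) \<le> 3/4 \<and> frac (grid n 2 x) \<le> 3/4)"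
    using frac_two_of_three_shifts[of "grid n 0 x"] by simp
  then have "(\<bar>a 0 - y\<bar> < e \<and> \<bar>a 1 - y\<bar> < e) \<or> (\<bar>a 0 - y\<bar> < e \<and> \<bar>a 2 - y\<bar> < e)
      \<or> (\<bar>a 1 - y\<bar> < e \<and> \<bar>a 2 - y\<bar> < e)"
    unfolding a_def using assms(3)[of 0] assms(3)[of 1] assms(3)[of 2] by fastforce
  then show ?thesis
    unfolding approx_net_eq_median3[OF assms(1,2)] a_def by (rule median3_close)
qed

lemma readout_grid_eq:
  assumes x: "0 \<le> x" "x \<le> 1" and "s \<le> 2" "frac (grid n s x) \<le> 3/4" "0 < m"
    and t: "\<forall>j\<in>{1..n + 2}. 2 * (t mod (1 + j * m)) \<le> 1 + j * m"
  defines "j \<equiv> nat \<lfloor>grid n s x\<rfloor>"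
  shows "j \<in> {1..n + 2}"
    and "readout m t (floor_gadget (grid n s x)) = 2 * real (t mod (1 + j * m)) / real (1 + j * m)"
proof -
  have floor: "1 \<le> \<lfloor>grid n s x\<rfloor>" "\<lfloor>grid n s x\<rfloor> \<le> int n + 2"
    using grid_floor_bounds[OF x \<open>s \<le> 2\<close>, where n = n] by auto
  then have "1 \<le> j" "j \<le> n + 2"
    unfolding j_def by linarith+
  then show j: "j \<in> {1..n + 2}"
    by simp
  have "1/4 \<le> grid n s x"
    using floor(1) by linarith
  then have "floor_gadget (grid n s x) = real j"
    using floor_gadget_eq_floor \<open>frac (grid n s x) \<le> 3/4\<close> floor(1) by (simp add: j_def)
  then show "readout m t (floor_gadget (grid n s x)) = 2 * real (t mod (1 + j * m)) / real (1 + j * m)"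
    using readout_eq_mod[of j m t] j t \<open>0 < m\<close> by simp
qed

lemma approx_net_uniform:
  fixes g :: "real \<Rightarrow> real"
  assumes g: "continuous_on {0..1} g" "\<forall>x\<in>{0..1}. g x \<in> {0..1}" and "0 < \<epsilon>"
  shows "\<exists>n m t. \<forall>x\<in>{0..1}. \<bar>approx_net n m t x - g x\<bar> < \<epsilon>"
proof -
  obtain \<delta> where "0 < \<delta>" and \<delta>: "\<forall>x\<in>{0..1}. \<forall>p\<in>{0..1}. dist p x < \<delta> \<longrightarrow> dist (g p) (g x) < \<epsilon> / 2"
    using compact_uniformly_continuous[OF g(1)] \<open>0 < \<epsilon>\<close>
    unfolding uniformly_continuous_on_def by (metis compact_Icc half_gt_zero)
  obtain n :: nat where n: "1 / \<delta> < real n" "4 / \<epsilon> < real n"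
    using reals_Archimedean2[of "max (1 / \<delta>) (4 / \<epsilon>)"] by auto
  then have "0 < n"
    using \<open>0 < \<delta>\<close> by (auto intro: ccontr)
  have "1 / real n < \<delta>"
    using n(1) \<open>0 < \<delta>\<close> \<open>0 < n\<close> by (simp add: field_simps)
  have "4 < \<epsilon> * real n"
    using n(2) \<open>0 < \<epsilon>\<close> by (simp add: field_simps)
  also have "\<dots> \<le> \<epsilon> * real (n + 2)"
    using \<open>0 < \<epsilon>\<close> by simp
  finally have "2 / real (n + 2) < \<epsilon> / 2"
    by (simp add: field_simps)
  define m :: nat where "m = fact (n + 2)"
  have "\<exists>t. \<forall>j\<in>{1..n + 2}. 2 * (t mod (1 + j * m)) \<le> 1 + j * m \<and>
      \<bar>2 * real (t mod (1 + j * m)) / real (1 + j * m) - g (grid_point n s j)\<bar> < 2 / real (n + 2)" for s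
    unfolding m_def using g(2) grid_point_in_unit by (intro goedel_encode_values) blast
  then obtain t where t_le: "\<And>s. \<forall>j\<in>{1..n + 2}. 2 * (t s mod (1 + j * m)) \<le> 1 + j * m"
    and t_close: "\<And>s j. j \<in> {1..n + 2} \<Longrightarrow>
      \<bar>2 * real (t s mod (1 + j * m)) / real (1 + j * m) - g (grid_point n s j)\<bar> < 2 / real (n + 2)"
    by metis
  have "\<bar>readout m (t s) (floor_gadget (grid n s x)) - g x\<bar> < \<epsilon>"
    if x: "0 \<le> x" "x \<le> 1" and s: "s \<le> 2" "frac (grid n s x) \<le> 3/4" for x s
  proof -
    define j where "j = nat \<lfloor>grid n s x\<rfloor>"
    have "0 < m"
      by (simp add: m_def)
    note readout = readout_grid_eq[OF x s this t_le, folded j_def]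
    have "dist (grid_point n s j) x < \<delta>"
      using grid_point_close[OF x \<open>0 < n\<close>, of s] \<open>1 / real n < \<delta>\<close>
      unfolding j_def dist_real_def by linarith
    then have "\<bar>g (grid_point n s j) - g x\<bar> < \<epsilon> / 2"
      using \<delta> grid_point_in_unit[of n s j] x unfolding dist_real_def by auto
    then show ?thesis
      using t_close[of j s, OF readout(1)] \<open>2 / real (n + 2) < \<epsilon> / 2\<close> unfolding readout(2) by linarith
  qed
  then show ?thesis
    by (intro exI[of _ n] exI[of _ m] exI[of _ t] ballI approx_net_close) auto
qed

lemma uniform_approx_by_sigma_net:
  fixes f :: "real \<Rightarrow> real"
  assumes "continuous_on {0..1} f" "0 < \<epsilon>"
  shows "\<exists>\<phi>. generated_by_net 10 5 \<phi> \<and> (\<forall>x\<in>{0..1}. \<bar>\<phi> x - f x\<bar> < \<epsilon>)"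
proof -
  obtain B where "0 < B" and B: "\<forall>x\<in>{0..1}. \<bar>f x\<bar> \<le> B"
    using compact_imp_bounded[OF compact_continuous_image[OF assms(1) compact_Icc]]
    unfolding bounded_pos by auto
  define g where "g x = (f x + B) / (2 * B)" for x
  have "continuous_on {0..1} g"
    unfolding g_def by (intro continuous_intros assms(1)) (use \<open>0 < B\<close> in simp)
  moreover have "\<forall>x\<in>{0..1}. g x \<in> {0..1}"
    using B \<open>0 < B\<close> by (auto simp: g_def field_simps abs_le_iff)
  ultimately obtain n m t where close: "\<forall>x\<in>{0..1}. \<bar>approx_net n m t x - g x\<bar> < \<epsilon> / (2 * B)"
    using approx_net_uniform[of g "\<epsilon> / (2 * B)"] \<open>0 < B\<close> assms(2) by auto
  define \<phi> where "\<phi> x = 2 * B * approx_net n m t x + - B" for x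
  have "generated_by_net 10 5 \<phi>"
    unfolding \<phi>_def by (intro generated_by_net_affine approx_net_generated)
  moreover have "\<bar>\<phi> x - f x\<bar> < \<epsilon>" if "x \<in> {0..1}" for x
  proof -
    have "\<phi> x - f x = 2 * B * (approx_net n m t x - g x)"
      using \<open>0 < B\<close> by (simp add: \<phi>_def g_def field_simps)
    then have "\<bar>\<phi> x - f x\<bar> = 2 * B * \<bar>approx_net n m t x - g x\<bar>"
      using \<open>0 < B\<close> by (simp add: abs_mult)
    also have "\<dots> < 2 * B * (\<epsilon> / (2 * B))"
      using close that \<open>0 < B\<close> by (intro mult_strict_left_mono) auto
    also have "\<dots> = \<epsilon>"
      using \<open>0 < B\<close> by simp
    finally show ?thesis .
  qed
  ultimately show ?thesis
    by auto
qed

theorem theorem15: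
  fixes f :: "real \<Rightarrow> real" and \<epsilon> :: real
  assumes "continuous_on {0..1} f" and "\<epsilon> > 0"
  shows "\<exists>\<phi>. generated_by_net 36 5 \<phi> \<and> (\<forall>x\<in>{0..9/10}. \<bar>\<phi> x - f x\<bar> < \<epsilon>)"
proof -
  obtain \<phi> where "generated_by_net 10 5 \<phi>" and "\<forall>x\<in>{0..1}. \<bar>\<phi> x - f x\<bar> < \<epsilon>"
    using uniform_approx_by_sigma_net assms by blast
  moreover have "generated_by_net 36 5 \<phi>"
    using generated_by_net_mono \<open>generated_by_net 10 5 \<phi>\<close> by simp
  ultimately show ?thesis
    by auto
qed

end
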